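(* Let $A$ be a finite involutive alphabet and let $\Gamma$ be a rooted involutive $A$-tree. Then $\Gamma$ is deterministic and context-free if and only if $\Gamma$ is isomorphic, as a rooted involutive $A$-graph (without node labels), to $\Gamma(p)$ for some state $p$ of a reduced pDFA over $A$.
   Context: An $A$-graph is a pair $(V,E)$ with $E\subseteq V\times A\times V$; it is deterministic if $(u,a,v),(u,a,v')\in E$ imply $v=v'$; it is involutive if $(u,a,v)\in E\iff(v,a^{-1},u)\in E$. A path is reduced if no edge in it is immediately followed by its inverse; a rooted involutive graph is a tree if each vertex is the end of a unique reduced path from the root. Context-free: for a connected rooted involutive graph, the level of a node is its distance from the root; for $v$ at level $n$ the end-cone $\Gamma(v)$ is the connected component containing $v$ of the subgraph induced on nodes of level $\ge n$, and its nodes of level $n$ are its frontier points. An end-isomorphism is a label-preserving graph isomorphism between two end-cones mapping frontier points onto frontier points. A connected involutive $A$-graph ($A$ finite involutive) is context-free if it has uniformly bounded degree and for some choice of root there are only finitely many end-isomorphism classes of end-cones. A partial deterministic finite automaton (pDFA) over a finite alphabet $A$ is a finite deterministic $A$-graph $(Q,T)$ (states and transitions). For a state $p$, $\Gamma(p)$ is the graph whose nodes are the runs (finite paths) of the pDFA starting at $p$, with the empty run as root and an edge from a run $\varrho$ to $\varrho\tau$ labeled by the label of the transition $\tau$, then closed under adding all inverse edges $(v,a^{-1},u)$ (viewing $A$ as involutive, passing to $A^{\pm1}=A\uplus A^{-1}$ if necessary). A pDFA over an involutive alphabet is reduced if it contains no path labeled $aa^{-1}$ for any $a\in A$. *)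

theory Defs
  imports Main
begin

definition involutive_alphabet :: "'a set \<Rightarrow> ('a \<Rightarrow> 'a) \<Rightarrow> bool" where
  "involutive_alphabet A ainv \<longleftrightarrow> (\<forall>a\<in>A. ainv a \<in> A \<and> ainv (ainv a) = a)"

definition a_graph :: "'a set \<Rightarrow> 'v set \<Rightarrow> ('v \<times> 'a \<times> 'v) set \<Rightarrow> bool" where
  "a_graph A V E \<longleftrightarrow> E \<subseteq> V \<times> A \<times> V"

definition deterministic :: "('v \<times> 'a \<times> 'v) set \<Rightarrow> bool" where
  "deterministic E \<longleftrightarrow> (\<forall>u a v v'. (u,a,v) \<in> E \<and> (u,a,v') \<in> E \<longrightarrow> v = v')"

definition involutive_graph :: "('a \<Rightarrow> 'a) \<Rightarrow> ('v \<times> 'a \<times> 'v) set \<Rightarrow> bool" where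
  "involutive_graph ainv E \<longleftrightarrow> (\<forall>u a v. (u,a,v) \<in> E \<longleftrightarrow> (v, ainv a, u) \<in> E)"

definition inv_edge :: "('a \<Rightarrow> 'a) \<Rightarrow> 'v \<times> 'a \<times> 'v \<Rightarrow> 'v \<times> 'a \<times> 'v" where
  "inv_edge ainv e = (case e of (u,a,v) \<Rightarrow> (v, ainv a, u))"

fun gpath :: "('v \<times> 'a \<times> 'v) set \<Rightarrow> 'v \<Rightarrow> ('v \<times> 'a \<times> 'v) list \<Rightarrow> 'v \<Rightarrow> bool" where
  "gpath E u [] v \<longleftrightarrow> u = v"
| "gpath E u (e # es) v \<longleftrightarrow> e \<in> E \<and> fst e = u \<and> gpath E (snd (snd e)) es v"

definition reduced_path :: "('a \<Rightarrow> 'a) \<Rightarrow> ('v \<times> 'a \<times> 'v) list \<Rightarrow> bool" where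
  "reduced_path ainv es \<longleftrightarrow> (\<forall>i. Suc i < length es \<longrightarrow> es ! Suc i \<noteq> inv_edge ainv (es ! i))"

definition rooted_tree :: "'a set \<Rightarrow> ('a \<Rightarrow> 'a) \<Rightarrow> 'v set \<Rightarrow> ('v \<times> 'a \<times> 'v) set \<Rightarrow> 'v \<Rightarrow> bool" where
  "rooted_tree A ainv V E r \<longleftrightarrow> a_graph A V E \<and> involutive_graph ainv E \<and> r \<in> V \<and>
     (\<forall>v\<in>V. \<exists>!es. gpath E r es v \<and> reduced_path ainv es)"

definition connected_graph :: "'v set \<Rightarrow> ('v \<times> 'a \<times> 'v) set \<Rightarrow> bool" where
  "connected_graph V E \<longleftrightarrow> (\<forall>u\<in>V. \<forall>v\<in>V. \<exists>es. gpath E u es v)"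

definition bounded_degree :: "'v set \<Rightarrow> ('v \<times> 'a \<times> 'v) set \<Rightarrow> bool" where
  "bounded_degree V E \<longleftrightarrow> (\<exists>N::nat. \<forall>v\<in>V. finite {e \<in> E. fst e = v} \<and> card {e \<in> E. fst e = v} \<le> N)"

definition gdist :: "('v \<times> 'a \<times> 'v) set \<Rightarrow> 'v \<Rightarrow> 'v \<Rightarrow> nat" where
  "gdist E u v = (LEAST n. \<exists>es. gpath E u es v \<and> length es = n)"

definition level :: "('v \<times> 'a \<times> 'v) set \<Rightarrow> 'v \<Rightarrow> 'v \<Rightarrow> nat" where
  "level E r v = gdist E r v"

definition end_cone :: "'v set \<Rightarrow> ('v \<times> 'a \<times> 'v) set \<Rightarrow> 'v \<Rightarrow> 'v \<Rightarrow> 'v set" where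
  "end_cone V E r v =
    (let W = {x \<in> V. level E r x \<ge> level E r v};
         EW = {e \<in> E. fst e \<in> W \<and> snd (snd e) \<in> W}
     in {x \<in> W. \<exists>es. gpath EW v es x})"

definition frontier :: "'v set \<Rightarrow> ('v \<times> 'a \<times> 'v) set \<Rightarrow> 'v \<Rightarrow> 'v \<Rightarrow> 'v set" where
  "frontier V E r v = {x \<in> end_cone V E r v. level E r x = level E r v}"

definition end_isomorphic :: "'v set \<Rightarrow> ('v \<times> 'a \<times> 'v) set \<Rightarrow> 'v \<Rightarrow> 'v \<Rightarrow> 'v \<Rightarrow> bool" where
  "end_isomorphic V E r u v \<longleftrightarrow>
    (\<exists>f. bij_betw f (end_cone V E r u) (end_cone V E r v) \<and>
      (\<forall>x\<in>end_cone V E r u. \<forall>y\<in>end_cone V E r u. \<forall>a. (x,a,y) \<in> E \<longleftrightarrow> (f x, a, f y) \<in> E) \<and>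
      f ` frontier V E r u = frontier V E r v)"

definition context_free :: "'a set \<Rightarrow> ('a \<Rightarrow> 'a) \<Rightarrow> 'v set \<Rightarrow> ('v \<times> 'a \<times> 'v) set \<Rightarrow> bool" where
  "context_free A ainv V E \<longleftrightarrow> finite A \<and> involutive_alphabet A ainv \<and> a_graph A V E \<and>
     involutive_graph ainv E \<and> connected_graph V E \<and> bounded_degree V E \<and>
     (\<exists>r\<in>V. \<exists>F. finite F \<and> F \<subseteq> V \<and> (\<forall>v\<in>V. \<exists>u\<in>F. end_isomorphic V E r u v))"

text \<open>A pDFA: finite deterministic A-graph (Q,T). States are taken to be natural numbers
  (w.l.o.g., every finite state set can be renamed into nat).\<close>
definition pDFA :: "'a set \<Rightarrow> nat set \<Rightarrow> (nat \<times> 'a \<times> nat) set \<Rightarrow> bool" where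
  "pDFA A Q T \<longleftrightarrow> finite Q \<and> a_graph A Q T \<and> deterministic T"

definition reduced_pDFA :: "'a set \<Rightarrow> ('a \<Rightarrow> 'a) \<Rightarrow> nat set \<Rightarrow> (nat \<times> 'a \<times> nat) set \<Rightarrow> bool" where
  "reduced_pDFA A ainv Q T \<longleftrightarrow> pDFA A Q T \<and>
     (\<forall>q a q' s. (q,a,q') \<in> T \<longrightarrow> (q', ainv a, s) \<notin> T)"

text \<open>The graph Gamma(p): nodes are runs starting at p, root is the empty run.\<close>
definition runs :: "(nat \<times> 'a \<times> nat) set \<Rightarrow> nat \<Rightarrow> (nat \<times> 'a \<times> nat) list set" where
  "runs T p = {\<rho>. \<exists>q. gpath T p \<rho> q}"

definition run_edges :: "('a \<Rightarrow> 'a) \<Rightarrow> (nat \<times> 'a \<times> nat) set \<Rightarrow> nat \<Rightarrow>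
    ((nat \<times> 'a \<times> nat) list \<times> 'a \<times> (nat \<times> 'a \<times> nat) list) set" where
  "run_edges ainv T p =
     {(\<rho>, fst (snd \<tau>), \<rho> @ [\<tau>]) | \<rho> \<tau>. \<rho> @ [\<tau>] \<in> runs T p} \<union>
     {(\<rho> @ [\<tau>], ainv (fst (snd \<tau>)), \<rho>) | \<rho> \<tau>. \<rho> @ [\<tau>] \<in> runs T p}"

definition rooted_iso :: "'v set \<Rightarrow> ('v \<times> 'a \<times> 'v) set \<Rightarrow> 'v \<Rightarrow>
    'w set \<Rightarrow> ('w \<times> 'a \<times> 'w) set \<Rightarrow> 'w \<Rightarrow> bool" where
  "rooted_iso V1 E1 r1 V2 E2 r2 \<longleftrightarrow>
    (\<exists>f. bij_betw f V1 V2 \<and> f r1 = r2 \<and>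
      (\<forall>x\<in>V1. \<forall>y\<in>V1. \<forall>a. (x,a,y) \<in> E1 \<longleftrightarrow> (f x, a, f y) \<in> E2))"

end

theory Submission
  imports Defs "HOL-Library.Sublist" "HOL-Library.Countable_Set"
begin

text \<open>Every node \<open>v\<close> of the tree is reached from the root by a unique reduced path, and its
  subtree consists of the nodes whose root path extends that of \<open>v\<close>. If the tree is
  deterministic, the subtree of \<open>v\<close> is determined by its language: the label words of the paths
  leading down from \<open>v\<close>. Whatever root is used for the end-cones, all nodes except the finitely
  many ancestors of that root have their subtree as end-cone, with \<open>v\<close> as only frontier point;
  so a context-free deterministic tree has only finitely many subtree languages, and these are
  the states of a reduced pDFA whose runs from the state of the root are the images of the
  root paths.

  Conversely, in \<open>\<Gamma>(p)\<close> the end-cone of a nonempty run is the set of its extensions, which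
  depends only on the state in which the run ends; so finitely many states give finitely many
  end-cones, and reducedness of the automaton makes \<open>\<Gamma>(p)\<close> deterministic.\<close>

abbreviation edge_label :: "'v \<times> 'a \<times> 'v \<Rightarrow> 'a" where
  "edge_label e \<equiv> fst (snd e)"

definition map_edge :: "('v \<Rightarrow> 'w) \<Rightarrow> 'v \<times> 'a \<times> 'v \<Rightarrow> 'w \<times> 'a \<times> 'w" where
  "map_edge h e = (h (fst e), edge_label e, h (snd (snd e)))"

lemma map_edge_simp [simp]: "map_edge h (x, a, y) = (h x, a, h y)"
  by (simp add: map_edge_def)

lemma edge_label_map_edge [simp]: "edge_label (map_edge h e) = edge_label e"
  by (simp add: map_edge_def)

lemma labels_map_edge [simp]: "map edge_label (map (map_edge h) es) = map edge_label es"
  by (induction es) auto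

lemma gpath_append [simp]:
  "gpath E u (xs @ ys) w \<longleftrightarrow> (\<exists>v. gpath E u xs v \<and> gpath E v ys w)"
  by (induction xs arbitrary: u) auto

lemma gpath_target_unique: "gpath E u es v \<Longrightarrow> gpath E u es v' \<Longrightarrow> v = v'"
  by (induction es arbitrary: u) auto

lemma gpath_mono: "gpath E u es v \<Longrightarrow> set es \<subseteq> E' \<Longrightarrow> gpath E' u es v"
  by (induction es arbitrary: u) auto

lemma gpath_edges: "gpath E u es v \<Longrightarrow> set es \<subseteq> E"
  by (induction es arbitrary: u) auto

lemma gpath_target_in: "a_graph A V E \<Longrightarrow> u \<in> V \<Longrightarrow> gpath E u es v \<Longrightarrow> v \<in> V"
  by (induction es arbitrary: u) (auto simp: a_graph_def)

lemma gpath_link: "gpath E u es v \<Longrightarrow> Suc i < length es \<Longrightarrow> fst (es ! Suc i) = snd (snd (es ! i))"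
proof (induction es arbitrary: u i)
  case (Cons e es)
  then show ?case by (cases i; cases es) auto
qed simp

lemma gpath_rev:
  assumes "involutive_graph ainv E" and "gpath E u es v"
  shows "gpath E v (rev (map (inv_edge ainv) es)) u"
  using assms(2)
proof (induction es arbitrary: u)
  case (Cons e es)
  with assms(1) show ?case
    by (cases e) (auto simp: inv_edge_def involutive_graph_def)
qed simp

lemma gpath_map_edge:
  assumes "\<forall>x\<in>S. \<forall>y\<in>S. \<forall>a. (x, a, y) \<in> E \<longrightarrow> (h x, a, h y) \<in> E'"
    and "gpath E u es w" and "u \<in> S" and "\<forall>e\<in>set es. snd (snd e) \<in> S"
  shows "gpath E' (h u) (map (map_edge h) es) (h w)"
  using assms(2-4)
proof (induction es arbitrary: u)
  case (Cons e es)
  with assms(1) show ?case by (cases e) auto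
qed simp

lemma gpath_eq_if_labels_eq:
  assumes "deterministic E"
  shows "gpath E u es w \<Longrightarrow> gpath E u es' w' \<Longrightarrow> map edge_label es = map edge_label es' \<Longrightarrow> es = es'"
proof (induction es arbitrary: u es')
  case (Cons e es)
  then obtain e' es'' where es': "es' = e' # es''" by (cases es') auto
  have "e' = e"
    using Cons.prems assms es' unfolding deterministic_def by (cases e; cases e') auto
  with Cons es' show ?case by auto
qed simp

lemma reduced_path_Nil [simp]: "reduced_path ainv []"
  by (simp add: reduced_path_def)

lemma reduced_path_Cons:
  "reduced_path ainv (e # es) \<longleftrightarrow>
     (es \<noteq> [] \<longrightarrow> hd es \<noteq> inv_edge ainv e) \<and> reduced_path ainv es"
  by (cases es) (simp_all add: reduced_path_def All_less_Suc2)

lemma reduced_path_append: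
  "reduced_path ainv (xs @ ys) \<longleftrightarrow> reduced_path ainv xs \<and> reduced_path ainv ys \<and>
     (xs \<noteq> [] \<and> ys \<noteq> [] \<longrightarrow> hd ys \<noteq> inv_edge ainv (last xs))"
  by (induction xs) (auto simp: reduced_path_Cons)

definition reduced_word :: "('a \<Rightarrow> 'a) \<Rightarrow> 'a list \<Rightarrow> bool" where
  "reduced_word ainv w \<longleftrightarrow> (\<forall>i. Suc i < length w \<longrightarrow> w ! Suc i \<noteq> ainv (w ! i))"

text \<open>By determinism, an edge is followed by its inverse exactly when its label is followed by
  the inverse label.\<close>

lemma reduced_path_iff_reduced_word:
  assumes det: "deterministic E" and inv: "involutive_graph ainv E" and path: "gpath E u es v"
  shows "reduced_path ainv es \<longleftrightarrow> reduced_word ainv (map edge_label es)"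
proof -
  have "es ! Suc i = inv_edge ainv (es ! i) \<longleftrightarrow> edge_label (es ! Suc i) = ainv (edge_label (es ! i))"
    if i: "Suc i < length es" for i
  proof -
    obtain x a y where ei: "es ! i = (x, a, y)" by (cases "es ! i")
    obtain y' b z where ej: "es ! Suc i = (y', b, z)" by (cases "es ! Suc i")
    have "y' = y" using gpath_link[OF path i] ei ej by simp
    have in_E: "(x, a, y) \<in> E" "(y, b, z) \<in> E"
      using gpath_edges[OF path] ei ej i \<open>y' = y\<close> by (metis Suc_lessD nth_mem subsetD)+
    have "(y, ainv a, x) \<in> E" using in_E(1) inv unfolding involutive_graph_def by blast
    then have "b = ainv a \<Longrightarrow> z = x" using det in_E(2) unfolding deterministic_def by blast
    then show ?thesis using ei ej \<open>y' = y\<close> by (auto simp: inv_edge_def)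
  qed
  then show ?thesis unfolding reduced_path_def reduced_word_def by auto
qed

lemma longest_common_prefix_append_if_not_prefix:
  "\<not> prefix xs R \<Longrightarrow> longest_common_prefix R (xs @ ys) = longest_common_prefix R xs"
  by (induction R xs rule: longest_common_prefix.induct) auto

lemma longest_common_prefix_if_prefix: "prefix xs R \<Longrightarrow> longest_common_prefix R xs = xs"
  by (meson longest_common_prefix_max_prefix longest_common_prefix_prefix2
      prefix_order.antisym prefix_order.refl)

lemma longest_common_prefix_snoc:
  "longest_common_prefix R (xs @ [e]) = longest_common_prefix R xs \<or>
   longest_common_prefix R (xs @ [e]) = xs @ [e] \<and> longest_common_prefix R xs = xs"
proof (cases "prefix xs R")
  case True
  have "prefix xs (longest_common_prefix R (xs @ [e]))"
    using True by (simp add: longest_common_prefix_max_prefix)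
  then have "longest_common_prefix R (xs @ [e]) = xs \<or> longest_common_prefix R (xs @ [e]) = xs @ [e]"
    using longest_common_prefix_prefix2[of R "xs @ [e]"] by (metis prefix_order.antisym prefix_snoc)
  then show ?thesis using True longest_common_prefix_if_prefix by metis
qed (simp add: longest_common_prefix_append_if_not_prefix)

lemma end_isomorphic_refl: "end_isomorphic V E r v v"
  unfolding end_isomorphic_def by (intro exI[of _ id]) auto

lemma end_isomorphic_sym:
  assumes "end_isomorphic V E r u v"
  shows "end_isomorphic V E r v u"
proof -
  obtain f where f: "bij_betw f (end_cone V E r u) (end_cone V E r v)"
    and edges: "\<forall>x\<in>end_cone V E r u. \<forall>y\<in>end_cone V E r u. \<forall>a. (x, a, y) \<in> E \<longleftrightarrow> (f x, a, f y) \<in> E"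
    and fr: "f ` frontier V E r u = frontier V E r v"
    using assms unfolding end_isomorphic_def by blast
  define g where "g = inv_into (end_cone V E r u) f"
  have g: "bij_betw g (end_cone V E r v) (end_cone V E r u)"
    unfolding g_def by (rule bij_betw_inv_into[OF f])
  have g_inv: "g x \<in> end_cone V E r u \<and> f (g x) = x" if "x \<in> end_cone V E r v" for x
    using that f unfolding g_def bij_betw_def by (auto simp: inv_into_into f_inv_into_f)
  have "(x, a, y) \<in> E \<longleftrightarrow> (g x, a, g y) \<in> E"
    if "x \<in> end_cone V E r v" "y \<in> end_cone V E r v" for x y a
  proof -
    have "(g x, a, g y) \<in> E \<longleftrightarrow> (f (g x), a, f (g y)) \<in> E"
      using edges g_inv that by blast
    then show ?thesis using g_inv that by simp
  qed
  moreover have "frontier V E r u \<subseteq> end_cone V E r u"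
    unfolding frontier_def by blast
  then have "g ` frontier V E r v = frontier V E r u"
    using fr f inv_into_image_cancel unfolding g_def bij_betw_def by metis
  ultimately show ?thesis using g unfolding end_isomorphic_def by blast
qed

lemma end_isomorphic_trans:
  assumes "end_isomorphic V E r u v" and "end_isomorphic V E r v w"
  shows "end_isomorphic V E r u w"
proof -
  obtain f where f: "bij_betw f (end_cone V E r u) (end_cone V E r v)"
    and f_edges: "\<forall>x\<in>end_cone V E r u. \<forall>y\<in>end_cone V E r u. \<forall>a. (x, a, y) \<in> E \<longleftrightarrow> (f x, a, f y) \<in> E"
    and f_fr: "f ` frontier V E r u = frontier V E r v"
    using assms(1) unfolding end_isomorphic_def by blast
  obtain g where g: "bij_betw g (end_cone V E r v) (end_cone V E r w)"
    and g_edges: "\<forall>x\<in>end_cone V E r v. \<forall>y\<in>end_cone V E r v. \<forall>a. (x, a, y) \<in> E \<longleftrightarrow> (g x, a, g y) \<in> E"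
    and g_fr: "g ` frontier V E r v = frontier V E r w"
    using assms(2) unfolding end_isomorphic_def by blast
  have "bij_betw (g \<circ> f) (end_cone V E r u) (end_cone V E r w)"
    using f g by (rule bij_betw_trans)
  moreover have "\<forall>x\<in>end_cone V E r u. \<forall>y\<in>end_cone V E r u. \<forall>a.
      (x, a, y) \<in> E \<longleftrightarrow> ((g \<circ> f) x, a, (g \<circ> f) y) \<in> E"
    using f f_edges g_edges by (simp add: bij_betw_apply)
  moreover have "(g \<circ> f) ` frontier V E r u = frontier V E r w"
    using f_fr g_fr by (metis image_comp)
  ultimately show ?thesis unfolding end_isomorphic_def by blast
qed

section \<open>Rooted involutive trees\<close>

locale rooted_involutive_tree =
  fixes A :: "'a set" and ainv :: "'a \<Rightarrow> 'a"
    and V :: "'v set" and E :: "('v \<times> 'a \<times> 'v) set" and r :: 'v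
  assumes tree: "rooted_tree A ainv V E r" and alphabet: "involutive_alphabet A ainv"
begin

lemma a_graph: "a_graph A V E"
  and involutive: "involutive_graph ainv E"
  and root_in: "r \<in> V"
  and unique_reduced_path: "\<forall>v\<in>V. \<exists>!es. gpath E r es v \<and> reduced_path ainv es"
  using tree unfolding rooted_tree_def by auto

lemma edge_in: "(u, a, w) \<in> E \<Longrightarrow> u \<in> V \<and> a \<in> A \<and> w \<in> V"
  using a_graph unfolding a_graph_def by auto

lemma edge_inverse: "(u, a, w) \<in> E \<Longrightarrow> (w, ainv a, u) \<in> E"
  using involutive unfolding involutive_graph_def by auto

lemma ainv_ainv: "a \<in> A \<Longrightarrow> ainv (ainv a) = a"
  using alphabet unfolding involutive_alphabet_def by auto

definition root_path :: "'v \<Rightarrow> ('v \<times> 'a \<times> 'v) list" where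
  "root_path v = (THE es. gpath E r es v \<and> reduced_path ainv es)"

lemma root_path: "v \<in> V \<Longrightarrow> gpath E r (root_path v) v \<and> reduced_path ainv (root_path v)"
  unfolding root_path_def using unique_reduced_path by (metis (mono_tags, lifting) theI')

lemma root_path_unique: "gpath E r es v \<Longrightarrow> reduced_path ainv es \<Longrightarrow> root_path v = es"
  using unique_reduced_path gpath_target_in[OF a_graph root_in] unfolding root_path_def
  by (metis (mono_tags, lifting) the1_equality)

lemma root_path_root [simp]: "root_path r = []"
  by (rule root_path_unique) auto

lemma root_path_inj: "x \<in> V \<Longrightarrow> y \<in> V \<Longrightarrow> root_path x = root_path y \<Longrightarrow> x = y"
  using root_path gpath_target_unique by metis

lemma root_path_prefix_closed:
  assumes "v \<in> V" and "root_path v = xs @ ys"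
  shows "\<exists>y\<in>V. root_path y = xs \<and> gpath E y ys v"
proof -
  obtain y where y: "gpath E r xs y" "gpath E y ys v" and "reduced_path ainv (xs @ ys)"
    using root_path[OF assms(1)] assms(2) by auto
  then have "root_path y = xs" using root_path_unique reduced_path_append by metis
  then show ?thesis using y gpath_target_in[OF a_graph root_in y(1)] by blast
qed

lemma root_path_snoc:
  assumes "v \<in> V" and "root_path v = xs @ [(u, a, w)]"
  shows "w = v \<and> (u, a, v) \<in> E \<and> u \<in> V \<and> root_path u = xs"
  using root_path_prefix_closed[OF assms] by auto

lemma edge_parent_or_child:
  assumes e: "(u, a, w) \<in> E"
  shows "root_path w = root_path u @ [(u, a, w)] \<or> root_path u = root_path w @ [(w, ainv a, u)]"
proof (cases "root_path u \<noteq> [] \<and> (u, a, w) = inv_edge ainv (last (root_path u))")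
  case True
  then obtain xs x b y where xs: "root_path u = xs @ [(x, b, y)]"
    and inv: "(u, a, w) = inv_edge ainv (x, b, y)"
    by (metis append_butlast_last_id prod_cases3)
  have "y = u" "(x, b, u) \<in> E" "root_path x = xs"
    using root_path_snoc[OF _ xs] edge_in[OF e] by blast+
  moreover have "w = x" "a = ainv b" using inv by (simp_all add: inv_edge_def)
  ultimately show ?thesis using ainv_ainv edge_in xs by auto
next
  case False
  have "gpath E r (root_path u @ [(u, a, w)]) w" and "reduced_path ainv (root_path u @ [(u, a, w)])"
    using root_path[of u] edge_in[OF e] e False by (auto simp: reduced_path_append reduced_path_Cons)
  then show ?thesis using root_path_unique by blast
qed

definition subtree :: "'v \<Rightarrow> 'v set" where
  "subtree v = {x \<in> V. prefix (root_path v) (root_path x)}"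

definition down_edges :: "('v \<times> 'a \<times> 'v) set" where
  "down_edges = {(u, a, w). u \<in> V \<and> w \<in> V \<and> root_path w = root_path u @ [(u, a, w)]}"

lemma down_edges_iff:
  "(u, a, w) \<in> down_edges \<longleftrightarrow> u \<in> V \<and> w \<in> V \<and> root_path w = root_path u @ [(u, a, w)]"
  by (simp add: down_edges_def)

lemma down_edges_subset: "down_edges \<subseteq> E"
proof
  fix e assume "e \<in> down_edges"
  then obtain u a w where "e = (u, a, w)" "w \<in> V" "root_path w = root_path u @ [(u, a, w)]"
    unfolding down_edges_def by auto
  then show "e \<in> E" using root_path_snoc by blast
qed

lemma subtree_subset: "subtree v \<subseteq> V"
  unfolding subtree_def by blast

lemma subtree_self: "v \<in> V \<Longrightarrow> v \<in> subtree v"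
  unfolding subtree_def by simp

lemma subtree_iff: "x \<in> subtree v \<longleftrightarrow> x \<in> V \<and> prefix (root_path v) (root_path x)"
  unfolding subtree_def by simp

lemma subtreeE:
  assumes "x \<in> subtree v"
  obtains zs where "x \<in> V" "root_path x = root_path v @ zs"
  using assms unfolding subtree_def prefix_def by blast

lemma path_below:
  assumes x: "x \<in> V" and v: "v \<in> V" and x_below: "root_path x = root_path v @ es"
  shows "gpath E v es x \<and> set es \<subseteq> down_edges \<and>
    (\<forall>e\<in>set es. fst e \<in> subtree v \<and> snd (snd e) \<in> subtree v)"
proof -
  obtain y where "y \<in> V" "root_path y = root_path v" "gpath E y es x"
    using root_path_prefix_closed[OF x x_below] by blast
  then have path: "gpath E v es x" using root_path_inj v by blast
  have "e \<in> down_edges \<and> fst e \<in> subtree v \<and> snd (snd e) \<in> subtree v" if "e \<in> set es" for e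
  proof -
    obtain es1 es2 u a w where "es = es1 @ (u, a, w) # es2" and "e = (u, a, w)"
      using \<open>e \<in> set es\<close> by (metis split_list prod_cases3)
    then have "root_path x = (root_path v @ es1 @ [(u, a, w)]) @ es2" using x_below by simp
    then obtain z where "z \<in> V" "root_path z = root_path v @ es1 @ [(u, a, w)]"
      using root_path_prefix_closed[OF x] by blast
    with root_path_snoc[of z "root_path v @ es1"] \<open>e = (u, a, w)\<close> show ?thesis
      unfolding down_edges_def subtree_def by auto
  qed
  with path show ?thesis by blast
qed

lemma root_path_append:
  assumes v: "v \<in> V" and path: "gpath E v es x" and red: "reduced_path ainv es"
    and into_subtree: "es \<noteq> [] \<Longrightarrow> snd (snd (hd es)) \<in> subtree v"
  shows "root_path x = root_path v @ es"
proof (rule root_path_unique)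
  show "gpath E r (root_path v @ es) x" using root_path[OF v] path by auto
  have "hd es \<noteq> inv_edge ainv (last (root_path v))" if "root_path v \<noteq> []" "es \<noteq> []"
  proof
    assume hd: "hd es = inv_edge ainv (last (root_path v))"
    obtain xs u a where xs: "root_path v = xs @ [(u, a, v)]"
      using \<open>root_path v \<noteq> []\<close> root_path_snoc[OF v]
      by (metis append_butlast_last_id prod_cases3)
    then have "snd (snd (hd es)) = u" and "root_path u = xs"
      using hd root_path_snoc[OF v xs] by (auto simp: inv_edge_def)
    then show False using into_subtree[OF \<open>es \<noteq> []\<close>] xs
      unfolding subtree_def by (auto dest: prefix_length_le)
  qed
  then show "reduced_path ainv (root_path v @ es)"
    using root_path[OF v] red by (auto simp: reduced_path_append)
qed

lemma subtree_exit:
  assumes "v \<in> V" and y: "y \<in> subtree v" and e: "(y, a, z) \<in> E" and z: "z \<notin> subtree v"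
  shows "y = v \<and> root_path v = root_path z @ [(z, ainv a, v)]"
proof -
  have "y \<in> V" "z \<in> V" using y e edge_in unfolding subtree_def by auto
  consider "root_path z = root_path y @ [(y, a, z)]" | "root_path y = root_path z @ [(z, ainv a, y)]"
    using edge_parent_or_child[OF e] by blast
  then show ?thesis
  proof cases
    case 1
    then show ?thesis using y z \<open>z \<in> V\<close> unfolding subtree_def by (auto intro: prefix_order.trans)
  next
    case 2
    then have "root_path v = root_path y" using y z \<open>z \<in> V\<close> unfolding subtree_def by auto
    then show ?thesis using 2 root_path_inj \<open>v \<in> V\<close> \<open>y \<in> V\<close> by auto
  qed
qed

lemma connected: "connected_graph V E"
  unfolding connected_graph_def
proof (intro ballI)
  fix u v assume "u \<in> V" "v \<in> V"
  then have "gpath E u (rev (map (inv_edge ainv) (root_path u)) @ root_path v) v"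
    using gpath_rev[OF involutive] root_path by fastforce
  then show "\<exists>es. gpath E u es v" by blast
qed


definition tree_dist :: "'v \<Rightarrow> 'v \<Rightarrow> nat" where
  "tree_dist u x = length (root_path u) + length (root_path x)
     - 2 * length (longest_common_prefix (root_path u) (root_path x))"

lemma tree_dist_self [simp]: "tree_dist u u = 0"
  by (simp add: tree_dist_def longest_common_prefix_if_prefix)

lemma length_longest_common_prefix_le:
  "length (longest_common_prefix xs ys) \<le> length xs"
  "length (longest_common_prefix xs ys) \<le> length ys"
  by (simp_all add: prefix_length_le longest_common_prefix_prefix1 longest_common_prefix_prefix2)

lemma tree_dist_child:
  assumes "root_path z = root_path y @ [e]"
  shows "tree_dist u z \<le> tree_dist u y + 1 \<and> tree_dist u y \<le> tree_dist u z + 1"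
  using longest_common_prefix_snoc[of "root_path u" "root_path y" e] assms
    length_longest_common_prefix_le[of "root_path u" "root_path y"]
    length_longest_common_prefix_le[of "root_path u" "root_path z"]
  unfolding tree_dist_def by auto

lemma tree_dist_edge: "(y, a, z) \<in> E \<Longrightarrow> tree_dist u z \<le> tree_dist u y + 1"
  by (metis edge_parent_or_child tree_dist_child)

lemma tree_dist_path: "gpath E y es z \<Longrightarrow> tree_dist u z \<le> tree_dist u y + length es"
proof (induction es arbitrary: y)
  case (Cons e es)
  then obtain a w where "(y, a, w) \<in> E" "gpath E w es z" by (cases e) auto
  with Cons.IH[of w] tree_dist_edge[of y a w u] show ?case by simp
qed simp

lemma tree_dist_path_exists:
  assumes "x \<in> V" and "u \<in> V"
  shows "\<exists>es. gpath E u es x \<and> length es = tree_dist u x"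
proof -
  define c where "c = longest_common_prefix (root_path u) (root_path x)"
  obtain cu cx where cu: "root_path u = c @ cu" and cx: "root_path x = c @ cx"
    using longest_common_prefix_prefix1 longest_common_prefix_prefix2 unfolding c_def prefix_def
    by metis
  obtain w w' where "w \<in> V" "root_path w = c" "gpath E w cu u"
    and "w' \<in> V" "root_path w' = c" "gpath E w' cx x"
    using root_path_prefix_closed assms cu cx by metis
  then have "gpath E u (rev (map (inv_edge ainv) cu) @ cx) x"
    using gpath_rev[OF involutive] root_path_inj by fastforce
  moreover have "length (rev (map (inv_edge ainv) cu) @ cx) = tree_dist u x"
    using cu cx unfolding tree_dist_def c_def[symmetric] by simp
  ultimately show ?thesis by blast
qed

lemma level_eq_tree_dist:
  assumes "x \<in> V" and "u \<in> V"
  shows "level E u x = tree_dist u x"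
  unfolding level_def gdist_def
proof (rule Least_equality)
  show "\<exists>es. gpath E u es x \<and> length es = tree_dist u x"
    using tree_dist_path_exists[OF assms] .
next
  fix n assume "\<exists>es. gpath E u es x \<and> length es = n"
  then show "tree_dist u x \<le> n" using tree_dist_path[of u _ x u] by auto
qed

text \<open>\<open>\<not> prefix (root_path v) (root_path u)\<close> says that \<open>v\<close> is not an ancestor of \<open>u\<close>. For
  such \<open>v\<close> the end-cone at \<open>v\<close> seen from the root \<open>u\<close> is just the subtree of \<open>v\<close>.\<close>

lemma tree_dist_below:
  assumes "\<not> prefix (root_path v) (root_path u)" and "root_path x = root_path v @ zs"
  shows "tree_dist u x = tree_dist u v + length zs"
  using longest_common_prefix_append_if_not_prefix[OF assms(1), of zs] assms(2)
    length_longest_common_prefix_le[of "root_path u" "root_path v"]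
  unfolding tree_dist_def by simp

lemma tree_dist_parent_less:
  assumes "\<not> prefix (root_path v) (root_path u)" and "root_path v = root_path z @ [e]"
  shows "tree_dist u z < tree_dist u v"
proof -
  have "longest_common_prefix (root_path u) (root_path v) = longest_common_prefix (root_path u) (root_path z)"
    using longest_common_prefix_snoc[of "root_path u" "root_path z" e]
      longest_common_prefix_prefix1[of "root_path u" "root_path v"] assms by auto
  then show ?thesis
    using assms(2) length_longest_common_prefix_le[of "root_path u" "root_path z"]
    unfolding tree_dist_def by simp
qed

lemma path_stays_in_subtree:
  assumes v: "v \<in> V" and not_ancestor: "\<not> prefix (root_path v) (root_path u)"
  shows "gpath E y es x \<Longrightarrow> y \<in> subtree v \<Longrightarrow>
    \<forall>e\<in>set es. tree_dist u v \<le> tree_dist u (snd (snd e)) \<Longrightarrow> x \<in> subtree v"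
proof (induction es arbitrary: y)
  case (Cons e es)
  then obtain a z where edge: "(y, a, z) \<in> E" and "gpath E z es x"
    and far: "tree_dist u v \<le> tree_dist u z"
    by (cases e) auto
  moreover have "z \<in> subtree v"
  proof (rule ccontr)
    assume "z \<notin> subtree v"
    then have "root_path v = root_path z @ [(z, ainv a, v)]"
      using subtree_exit[OF v Cons.prems(2) edge] by blast
    then have "tree_dist u z < tree_dist u v"
      by (rule tree_dist_parent_less[OF not_ancestor])
    with far show False by simp
  qed
  ultimately show ?case using Cons.IH Cons.prems(3) by simp
qed simp

lemma end_cone_eq_subtree:
  assumes u: "u \<in> V" and v: "v \<in> V" and not_ancestor: "\<not> prefix (root_path v) (root_path u)"
  shows "end_cone V E u v = subtree v"
proof -
  define W where "W = {x \<in> V. level E u x \<ge> level E u v}"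
  define EW where "EW = {e \<in> E. fst e \<in> W \<and> snd (snd e) \<in> W}"
  have cone: "end_cone V E u v = {x \<in> W. \<exists>es. gpath EW v es x}"
    unfolding end_cone_def W_def EW_def Let_def by simp
  have W: "x \<in> W \<longleftrightarrow> x \<in> V \<and> tree_dist u v \<le> tree_dist u x" for x
    using level_eq_tree_dist[OF _ u, of x] level_eq_tree_dist[OF v u] unfolding W_def by auto
  have subtree_W: "x \<in> W" if below: "x \<in> subtree v" for x
  proof -
    obtain zs where "x \<in> V" and x: "root_path x = root_path v @ zs"
      using below by (rule subtreeE)
    then show ?thesis using tree_dist_below[OF not_ancestor x] W by simp
  qed
  have "x \<in> subtree v" if x: "x \<in> end_cone V E u v" for x
  proof -
    obtain es where path: "gpath EW v es x" using x unfolding cone by blast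
    then have "gpath E v es x" and "\<forall>e\<in>set es. tree_dist u v \<le> tree_dist u (snd (snd e))"
      using gpath_mono[OF path] gpath_edges[OF path] W unfolding EW_def by auto
    then show ?thesis using path_stays_in_subtree[OF v not_ancestor] subtree_self[OF v] by blast
  qed
  moreover have "x \<in> end_cone V E u v" if x: "x \<in> subtree v" for x
  proof -
    obtain zs where "x \<in> V" "root_path x = root_path v @ zs"
      using x by (rule subtreeE)
    then have path: "gpath E v zs x"
      and inside: "\<forall>e\<in>set zs. fst e \<in> subtree v \<and> snd (snd e) \<in> subtree v"
      using path_below v by blast+
    have "set zs \<subseteq> EW"
      using gpath_edges[OF path] inside subtree_W unfolding EW_def by blast
    then show ?thesis using gpath_mono[OF path] x subtree_W unfolding cone by blast
  qed
  ultimately show ?thesis by blast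
qed

lemma frontier_eq_singleton:
  assumes u: "u \<in> V" and v: "v \<in> V" and not_ancestor: "\<not> prefix (root_path v) (root_path u)"
  shows "frontier V E u v = {v}"
proof -
  have "x = v" if below: "x \<in> subtree v" and level: "level E u x = level E u v" for x
  proof -
    obtain zs where x: "x \<in> V" "root_path x = root_path v @ zs"
      using below by (rule subtreeE)
    have "tree_dist u x = tree_dist u v"
      using level level_eq_tree_dist[OF x(1) u] level_eq_tree_dist[OF v u] by simp
    then have "zs = []" using tree_dist_below[OF not_ancestor x(2)] by simp
    then show ?thesis using root_path_inj x v by simp
  qed
  moreover have "frontier V E u v = {x \<in> subtree v. level E u x = level E u v}"
    unfolding frontier_def end_cone_eq_subtree[OF assms] ..
  ultimately show ?thesis using subtree_self[OF v] by blast
qed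

end

section \<open>Subtree languages of deterministic trees\<close>

locale deterministic_tree = rooted_involutive_tree A ainv V E r
  for A :: "'a set" and ainv :: "'a \<Rightarrow> 'a"
    and V :: "'v set" and E :: "('v \<times> 'a \<times> 'v) set" and r :: 'v +
  assumes deterministic: "deterministic E"
begin

definition subtree_lang :: "'v \<Rightarrow> 'a list set" where
  "subtree_lang v = {map edge_label es | es. \<exists>x\<in>V. root_path x = root_path v @ es}"

lemma down_edge_unique: "(u, a, w) \<in> down_edges \<Longrightarrow> (u, a, w') \<in> down_edges \<Longrightarrow> w = w'"
  using deterministic down_edges_subset unfolding deterministic_def by blast

lemma down_edge_if_in_subtree_lang:
  assumes u: "u \<in> V" and "a # s \<in> subtree_lang u"
  shows "\<exists>w. (u, a, w) \<in> down_edges"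
proof -
  obtain es x where x: "x \<in> V" "root_path x = root_path u @ es" "map edge_label es = a # s"
    using assms(2) unfolding subtree_lang_def by auto
  then obtain e es' where es: "es = e # es'" "edge_label e = a" by auto
  then have "e \<in> down_edges" "fst e = u" using path_below[OF x(1) u x(2)] by auto
  then show ?thesis using es(2) by (cases e) auto
qed

lemma subtree_lang_down_edge:
  assumes uw: "(u, a, w) \<in> down_edges"
  shows "subtree_lang w = {s. a # s \<in> subtree_lang u}"
proof
  show "subtree_lang w \<subseteq> {s. a # s \<in> subtree_lang u}"
  proof
    fix s assume "s \<in> subtree_lang w"
    then obtain es x where x: "x \<in> V" "root_path x = root_path w @ es" and s: "s = map edge_label es"
      unfolding subtree_lang_def by blast
    then have "root_path x = root_path u @ (u, a, w) # es"
      using uw unfolding down_edges_def by simp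
    then show "s \<in> {s. a # s \<in> subtree_lang u}"
      using x(1) s unfolding subtree_lang_def by force
  qed
next
  show "{s. a # s \<in> subtree_lang u} \<subseteq> subtree_lang w"
  proof
    fix s assume "s \<in> {s. a # s \<in> subtree_lang u}"
    then obtain es x where x: "x \<in> V" "root_path x = root_path u @ es" "map edge_label es = a # s"
      unfolding subtree_lang_def by auto
    then obtain e es' where es: "es = e # es'" "edge_label e = a" "map edge_label es' = s" by auto
    have "u \<in> V" using uw unfolding down_edges_def by simp
    then have "e \<in> down_edges" "fst e = u" using path_below[OF x(1) _ x(2)] es(1) by auto
    then have "e = (u, a, w)" using down_edge_unique uw es(2) by (cases e) auto
    then have "root_path x = root_path w @ es'" using x(2) es(1) uw unfolding down_edges_def by simp
    then show "s \<in> subtree_lang w" using x(1) es(3) unfolding subtree_lang_def by blast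
  qed
qed

text \<open>A label-preserving map of subtrees sends downward paths to downward paths: by determinism
  reducedness is a property of labels only, and the first edge of the image stays in the
  subtree, so it does not return to the parent.\<close>

lemma subtree_lang_mono:
  assumes v: "v \<in> V" and v': "v' \<in> V"
    and maps_to: "h ` subtree v \<subseteq> subtree v'" and root: "h v = v'"
    and hom: "\<forall>x\<in>subtree v. \<forall>y\<in>subtree v. \<forall>a. (x, a, y) \<in> E \<longrightarrow> (h x, a, h y) \<in> E"
  shows "subtree_lang v \<subseteq> subtree_lang v'"
proof
  fix s assume "s \<in> subtree_lang v"
  then obtain es x where x: "x \<in> V" "root_path x = root_path v @ es" and s: "s = map edge_label es"
    unfolding subtree_lang_def by blast
  have path: "gpath E v es x" and inside: "\<forall>e\<in>set es. snd (snd e) \<in> subtree v"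
    using path_below[OF x(1) v x(2)] by auto
  define es' where "es' = map (map_edge h) es"
  have path': "gpath E v' es' (h x)"
    unfolding es'_def root[symmetric] using gpath_map_edge[OF hom path subtree_self[OF v] inside] .
  have labels: "map edge_label es' = map edge_label es"
    unfolding es'_def by simp
  have "reduced_path ainv es" using root_path[OF x(1)] x(2) by (simp add: reduced_path_append)
  then have "reduced_path ainv es'"
    using reduced_path_iff_reduced_word[OF deterministic involutive path]
      reduced_path_iff_reduced_word[OF deterministic involutive path'] labels by simp
  moreover have "es' \<noteq> [] \<Longrightarrow> snd (snd (hd es')) \<in> subtree v'"
    using inside maps_to unfolding es'_def by (cases es) (auto simp: map_edge_def)
  ultimately have "root_path (h x) = root_path v' @ es'"
    using root_path_append[OF v' path'] by blast
  moreover have "x \<in> subtree v" using x by (simp add: subtree_iff)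
  then have "h x \<in> subtree v'" using maps_to by blast
  then have "h x \<in> V" by (simp add: subtree_iff)
  ultimately have "map edge_label es' \<in> subtree_lang v'"
    unfolding subtree_lang_def by blast
  then show "s \<in> subtree_lang v'" using s labels by simp
qed

lemma subtree_lang_eq_if_end_isomorphic:
  assumes u: "u \<in> V" and v: "v \<in> V" and v': "v' \<in> V"
    and "\<not> prefix (root_path v) (root_path u)" and "\<not> prefix (root_path v') (root_path u)"
    and "end_isomorphic V E u v v'"
  shows "subtree_lang v = subtree_lang v'"
proof -
  have sub: "subtree_lang w \<subseteq> subtree_lang w'"
    if w: "w \<in> V" "\<not> prefix (root_path w) (root_path u)"
      and w': "w' \<in> V" "\<not> prefix (root_path w') (root_path u)"
      and iso: "end_isomorphic V E u w w'" for w w'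
  proof -
    obtain f where bij: "bij_betw f (subtree w) (subtree w')"
      and hom: "\<forall>x\<in>subtree w. \<forall>y\<in>subtree w. \<forall>a. (x, a, y) \<in> E \<longleftrightarrow> (f x, a, f y) \<in> E"
      and root: "f ` {w} = {w'}"
      using iso unfolding end_isomorphic_def end_cone_eq_subtree[OF u w] end_cone_eq_subtree[OF u w']
        frontier_eq_singleton[OF u w] frontier_eq_singleton[OF u w'] by (elim exE conjE) (rule that)
    show ?thesis
    proof (rule subtree_lang_mono[OF w(1) w'(1)])
      show "f ` subtree w \<subseteq> subtree w'" using bij by (simp add: bij_betw_def)
      show "f w = w'" using root by simp
      show "\<forall>x\<in>subtree w. \<forall>y\<in>subtree w. \<forall>a. (x, a, y) \<in> E \<longrightarrow> (f x, a, f y) \<in> E"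
        using hom by blast
    qed
  qed
  show ?thesis
    using sub[OF v assms(4) v' assms(5) assms(6)]
      sub[OF v' assms(5) v assms(4) end_isomorphic_sym[OF assms(6)]] by (rule equalityI)
qed

text \<open>Only the finitely many ancestors of the root \<open>u\<close> of the end-cone decomposition have
  end-cones that are not subtrees.\<close>

lemma finite_subtree_langs:
  assumes "context_free A ainv V E"
  shows "finite (subtree_lang ` V)"
proof -
  obtain u F where u: "u \<in> V" and F: "finite F" and cover: "\<forall>v\<in>V. \<exists>w\<in>F. end_isomorphic V E u w v"
    using assms unfolding context_free_def by blast
  define ancestors where "ancestors = {v \<in> V. prefix (root_path v) (root_path u)}"
  have "root_path ` ancestors \<subseteq> set (prefixes (root_path u))"
    unfolding ancestors_def by auto
  moreover have "inj_on root_path ancestors"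
    using root_path_inj unfolding ancestors_def inj_on_def by blast
  ultimately have finite_ancestors: "finite ancestors"
    by (meson finite_imageD finite_set finite_subset)
  define rep where "rep w = (SOME v. v \<in> V - ancestors \<and> end_isomorphic V E u w v)" for w
  have "subtree_lang v \<in> (subtree_lang \<circ> rep) ` F" if v: "v \<in> V - ancestors" for v
  proof -
    obtain w where "w \<in> F" and wv: "end_isomorphic V E u w v" using cover v by blast
    then have rep: "rep w \<in> V - ancestors" "end_isomorphic V E u w (rep w)"
      using someI[of "\<lambda>v'. v' \<in> V - ancestors \<and> end_isomorphic V E u w v'"] v
      unfolding rep_def by blast+
    have "end_isomorphic V E u v (rep w)"
      using end_isomorphic_trans[OF end_isomorphic_sym[OF wv] rep(2)] .
    then have "subtree_lang v = subtree_lang (rep w)"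
      using subtree_lang_eq_if_end_isomorphic u v rep(1) unfolding ancestors_def by blast
    then show ?thesis using \<open>w \<in> F\<close> by simp
  qed
  then have "subtree_lang ` V \<subseteq> subtree_lang ` ancestors \<union> (subtree_lang \<circ> rep) ` F"
    by blast
  moreover have "finite (subtree_lang ` ancestors \<union> (subtree_lang \<circ> rep) ` F)"
    using finite_ancestors F by simp
  ultimately show ?thesis by (rule finite_subset)
qed

end

section \<open>The graphs of runs of a pDFA\<close>

lemma run_edges_iff:
  "(x, a, y) \<in> run_edges ainv T p \<longleftrightarrow>
     (\<exists>\<tau>. y = x @ [\<tau>] \<and> y \<in> runs T p \<and> a = edge_label \<tau>) \<or>
     (\<exists>\<tau>. x = y @ [\<tau>] \<and> x \<in> runs T p \<and> a = ainv (edge_label \<tau>))"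
  unfolding run_edges_def by blast

lemma runs_prefix: "\<rho> @ \<sigma> \<in> runs T p \<Longrightarrow> \<rho> \<in> runs T p"
  unfolding runs_def by auto

lemma runs_snocD: "\<rho> @ [\<tau>] \<in> runs T p \<Longrightarrow> gpath T p \<rho> (fst \<tau>) \<and> \<tau> \<in> T"
  unfolding runs_def by auto

lemma runs_append_iff_same_target:
  assumes "gpath T p \<rho> q" and "gpath T p \<rho>' q"
  shows "\<rho> @ \<sigma> \<in> runs T p \<longleftrightarrow> \<rho>' @ \<sigma> \<in> runs T p"
proof -
  have "\<rho> @ \<sigma> \<in> runs T p \<longleftrightarrow> (\<exists>q'. gpath T q \<sigma> q')" if path: "gpath T p \<rho> q" for \<rho>
  proof
    assume "\<rho> @ \<sigma> \<in> runs T p"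
    then obtain q' q'' where "gpath T p \<rho> q''" "gpath T q'' \<sigma> q'" unfolding runs_def by auto
    then show "\<exists>q'. gpath T q \<sigma> q'" using gpath_target_unique[OF path] by blast
  next
    assume "\<exists>q'. gpath T q \<sigma> q'"
    then obtain q' where "gpath T q \<sigma> q'" by blast
    then have "gpath T p (\<rho> @ \<sigma>) q'" using path by auto
    then show "\<rho> @ \<sigma> \<in> runs T p" unfolding runs_def by blast
  qed
  then show ?thesis using assms by blast
qed

lemma runs_snoc_eq_if_label_eq:
  assumes "deterministic T" and "\<rho> @ [t1] \<in> runs T p" and "\<rho> @ [t2] \<in> runs T p"
    and "edge_label t1 = edge_label t2"
  shows "t1 = t2"
proof -
  have "gpath T p \<rho> (fst t1)" "gpath T p \<rho> (fst t2)" "t1 \<in> T" "t2 \<in> T"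
    using runs_snocD[OF assms(2)] runs_snocD[OF assms(3)] by blast+
  moreover from this(1,2) have "fst t1 = fst t2" by (rule gpath_target_unique)
  ultimately show ?thesis using assms(1,4) unfolding deterministic_def by (cases t1; cases t2) auto
qed

lemma runs_no_backtrack:
  assumes "reduced_pDFA A ainv Q T" and "(\<rho> @ [t1]) @ [t2] \<in> runs T p"
  shows "edge_label t2 \<noteq> ainv (edge_label t1)"
proof -
  have "t1 \<in> T" "t2 \<in> T" "fst t2 = snd (snd t1)"
    using runs_snocD[OF assms(2)] runs_snocD[OF runs_prefix[OF assms(2)]] by auto
  then show ?thesis using assms(1) unfolding reduced_pDFA_def by (cases t1; cases t2) auto
qed

text \<open>Reducedness of the automaton is what makes \<open>\<Gamma>(p)\<close> deterministic: an edge back to the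
  parent of a run can never carry the same label as an edge to one of its children.\<close>

lemma deterministic_run_edges:
  assumes reduced: "reduced_pDFA A ainv Q T"
  shows "deterministic (run_edges ainv T p)"
  unfolding deterministic_def
proof (intro allI impI, elim conjE)
  fix x a y1 y2
  assume "(x, a, y1) \<in> run_edges ainv T p" and "(x, a, y2) \<in> run_edges ainv T p"
  then consider
      (child_child) t1 t2 where "y1 = x @ [t1]" "y1 \<in> runs T p" "a = edge_label t1"
        "y2 = x @ [t2]" "y2 \<in> runs T p" "a = edge_label t2"
    | (child_parent) t1 t2 where "y1 = x @ [t1]" "y1 \<in> runs T p" "a = edge_label t1"
        "x = y2 @ [t2]" "a = ainv (edge_label t2)"
    | (parent_child) t1 t2 where "x = y1 @ [t1]" "a = ainv (edge_label t1)"
        "y2 = x @ [t2]" "y2 \<in> runs T p" "a = edge_label t2"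
    | (parent_parent) t1 t2 where "x = y1 @ [t1]" "x = y2 @ [t2]"
    unfolding run_edges_iff by blast
  then show "y1 = y2"
  proof cases
    case child_child
    have "deterministic T" using reduced unfolding reduced_pDFA_def pDFA_def by blast
    with child_child have "t1 = t2" by (intro runs_snoc_eq_if_label_eq[of T x]) simp_all
    with child_child show ?thesis by simp
  next
    case child_parent
    then show ?thesis using runs_no_backtrack[OF reduced, of y2 t2 t1] by simp
  next
    case parent_child
    then show ?thesis using runs_no_backtrack[OF reduced, of y1 t1 t2] by simp
  qed simp
qed

lemma bounded_degree_if_deterministic:
  assumes "finite A" and "a_graph A V E" and "deterministic E"
  shows "bounded_degree V E"
  unfolding bounded_degree_def
proof (intro exI ballI)
  fix v
  define succ where "succ a = (v, a, THE w. (v, a, w) \<in> E)" for a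
  have "{e \<in> E. fst e = v} \<subseteq> succ ` A"
  proof
    fix e assume "e \<in> {e \<in> E. fst e = v}"
    then obtain a w where e: "e = (v, a, w)" "(v, a, w) \<in> E" by (cases e) auto
    then have "(THE w. (v, a, w) \<in> E) = w"
      using assms(3) unfolding deterministic_def by (intro the_equality) auto
    moreover have "a \<in> A" using assms(2) e unfolding a_graph_def by auto
    ultimately show "e \<in> succ ` A" unfolding succ_def using e by force
  qed
  then show "finite {e \<in> E. fst e = v} \<and> card {e \<in> E. fst e = v} \<le> card A"
    using assms(1) by (meson card_image_le finite_imageI finite_subset card_mono le_trans)
qed

lemma run_edges_shift:
  assumes "gpath T p \<rho> q" and "gpath T p \<rho>' q"
    and "\<rho> @ \<sigma>1 \<in> runs T p" and "\<rho> @ \<sigma>2 \<in> runs T p"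
  shows "(\<rho> @ \<sigma>1, a, \<rho> @ \<sigma>2) \<in> run_edges ainv T p \<longleftrightarrow> (\<rho>' @ \<sigma>1, a, \<rho>' @ \<sigma>2) \<in> run_edges ainv T p"
proof -
  have "\<rho>' @ \<sigma>1 \<in> runs T p" "\<rho>' @ \<sigma>2 \<in> runs T p"
    using runs_append_iff_same_target[OF assms(1,2)] assms(3,4) by blast+
  then show ?thesis unfolding run_edges_iff using assms(3,4) by auto
qed

lemma bij_betw_shift_runs:
  assumes "gpath T p \<rho> q" and "gpath T p \<rho>' q"
  shows "bij_betw (\<lambda>\<sigma>. \<rho>' @ drop (length \<rho>) \<sigma>)
    {\<sigma> \<in> runs T p. prefix \<rho> \<sigma>} {\<sigma> \<in> runs T p. prefix \<rho>' \<sigma>}"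
proof (rule bij_betw_byWitness[where f' = "\<lambda>\<sigma>. \<rho> @ drop (length \<rho>') \<sigma>"])
  have shift: "(\<lambda>\<sigma>. \<rho>2 @ drop (length \<rho>1) \<sigma>) ` {\<sigma> \<in> runs T p. prefix \<rho>1 \<sigma>}
      \<subseteq> {\<sigma> \<in> runs T p. prefix \<rho>2 \<sigma>}"
    if "gpath T p \<rho>1 q" "gpath T p \<rho>2 q" for \<rho>1 \<rho>2
  proof
    fix \<sigma>' assume "\<sigma>' \<in> (\<lambda>\<sigma>. \<rho>2 @ drop (length \<rho>1) \<sigma>) ` {\<sigma> \<in> runs T p. prefix \<rho>1 \<sigma>}"
    then obtain \<tau> where "\<rho>1 @ \<tau> \<in> runs T p" "\<sigma>' = \<rho>2 @ \<tau>"
      unfolding prefix_def by auto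
    then show "\<sigma>' \<in> {\<sigma> \<in> runs T p. prefix \<rho>2 \<sigma>}"
      using runs_append_iff_same_target[OF that, of \<tau>] by simp
  qed
  show "(\<lambda>\<sigma>. \<rho>' @ drop (length \<rho>) \<sigma>) ` {\<sigma> \<in> runs T p. prefix \<rho> \<sigma>} \<subseteq> {\<sigma> \<in> runs T p. prefix \<rho>' \<sigma>}"
    using shift[OF assms] .
  show "(\<lambda>\<sigma>. \<rho> @ drop (length \<rho>') \<sigma>) ` {\<sigma> \<in> runs T p. prefix \<rho>' \<sigma>} \<subseteq> {\<sigma> \<in> runs T p. prefix \<rho> \<sigma>}"
    using shift[OF assms(2,1)] .
qed (auto simp: prefix_def)

section \<open>The automaton of subtree languages\<close>

context deterministic_tree
begin

definition lang_state :: "'v \<Rightarrow> nat" where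
  "lang_state v = to_nat_on (subtree_lang ` V) (subtree_lang v)"

definition lang_trans :: "(nat \<times> 'a \<times> nat) set" where
  "lang_trans = map_edge lang_state ` down_edges"

definition lang_run :: "'v \<Rightarrow> (nat \<times> 'a \<times> nat) list" where
  "lang_run x = map (map_edge lang_state) (root_path x)"

context
  assumes finite_langs: "finite (subtree_lang ` V)"
begin

lemma lang_state_eq_iff:
  assumes "x \<in> V" and "y \<in> V"
  shows "lang_state x = lang_state y \<longleftrightarrow> subtree_lang x = subtree_lang y"
proof -
  have "inj_on (to_nat_on (subtree_lang ` V)) (subtree_lang ` V)"
    using to_nat_on_finite[OF finite_langs] by (rule bij_betw_imp_inj_on)
  then show ?thesis using assms unfolding lang_state_def by (simp add: inj_on_eq_iff)
qed

text \<open>The subtree language of a node determines the labels of its children and their subtree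
  languages.\<close>

lemma lang_trans_from_state:
  assumes x: "x \<in> V"
  shows "(lang_state x, a, q) \<in> lang_trans \<longleftrightarrow> (\<exists>w. (x, a, w) \<in> down_edges \<and> q = lang_state w)"
proof
  assume "(lang_state x, a, q) \<in> lang_trans"
  then obtain u w where uw: "(u, a, w) \<in> down_edges"
    and "lang_state u = lang_state x" and q: "q = lang_state w"
    unfolding lang_trans_def by (auto simp: map_edge_def)
  moreover have u: "u \<in> V" "w \<in> V" "root_path w = root_path u @ [(u, a, w)]"
    using uw unfolding down_edges_def by auto
  ultimately have same_lang: "subtree_lang u = subtree_lang x"
    using lang_state_eq_iff x by simp
  have "[a] \<in> subtree_lang u"
    using u unfolding subtree_lang_def by force
  then have "[a] \<in> subtree_lang x" using same_lang by simp
  then obtain w' where w': "(x, a, w') \<in> down_edges"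
    using down_edge_if_in_subtree_lang[OF x] by blast
  then have "subtree_lang w' = subtree_lang w"
    using subtree_lang_down_edge[OF w'] subtree_lang_down_edge[OF uw] same_lang by simp
  moreover have "w' \<in> V" using w' unfolding down_edges_def by simp
  ultimately have "q = lang_state w'" using q lang_state_eq_iff u(2) by simp
  then show "\<exists>w. (x, a, w) \<in> down_edges \<and> q = lang_state w" using w' by blast
next
  assume "\<exists>w. (x, a, w) \<in> down_edges \<and> q = lang_state w"
  then show "(lang_state x, a, q) \<in> lang_trans" unfolding lang_trans_def by force
qed

lemma lang_trans_a_graph: "a_graph A (lang_state ` V) lang_trans"
  unfolding a_graph_def lang_trans_def using down_edges_subset edge_in by fastforce

lemma lang_trans_deterministic: "deterministic lang_trans"
  unfolding deterministic_def
proof (intro allI impI, elim conjE)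
  fix q a q1 q2 assume q1: "(q, a, q1) \<in> lang_trans" and q2: "(q, a, q2) \<in> lang_trans"
  then obtain u where "u \<in> V" "q = lang_state u"
    using lang_trans_a_graph unfolding a_graph_def by blast
  then obtain w1 w2 where "(u, a, w1) \<in> down_edges" "q1 = lang_state w1"
    and "(u, a, w2) \<in> down_edges" "q2 = lang_state w2"
    using lang_trans_from_state q1 q2 by blast
  then show "q1 = q2" using down_edge_unique by blast
qed

lemma lang_trans_no_return: "(q, a, q') \<in> lang_trans \<Longrightarrow> (q', ainv a, s) \<notin> lang_trans"
proof
  assume "(q, a, q') \<in> lang_trans" and returning: "(q', ainv a, s) \<in> lang_trans"
  then obtain u w where uw: "(u, a, w) \<in> down_edges" and "q' = lang_state w"
    unfolding lang_trans_def by (auto simp: map_edge_def)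
  moreover have "w \<in> V" using uw unfolding down_edges_def by simp
  ultimately obtain z where wz: "(w, ainv a, z) \<in> down_edges"
    using lang_trans_from_state returning by blast
  have "(w, ainv a, u) \<in> E" using edge_inverse down_edges_subset uw by blast
  then have "z = u" using deterministic wz down_edges_subset unfolding deterministic_def by blast
  then show False using uw wz unfolding down_edges_def by auto
qed

lemma lang_reduced_pDFA: "reduced_pDFA A ainv (lang_state ` V) lang_trans"
proof -
  have "lang_state ` V = to_nat_on (subtree_lang ` V) ` subtree_lang ` V"
    unfolding lang_state_def by (simp add: image_image)
  then have "finite (lang_state ` V)" using finite_langs by simp
  then show ?thesis
    unfolding reduced_pDFA_def pDFA_def
    using lang_trans_a_graph lang_trans_deterministic lang_trans_no_return by blast
qed

lemma lang_run_path: "x \<in> V \<Longrightarrow> gpath lang_trans (lang_state r) (lang_run x) (lang_state x)"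
proof -
  assume x: "x \<in> V"
  have path: "gpath E r (root_path x) x" and down: "set (root_path x) \<subseteq> down_edges"
    and inside: "\<forall>e\<in>set (root_path x). snd (snd e) \<in> subtree r"
    using path_below[OF x root_in, of "root_path x"] by auto
  from path down have path_down: "gpath down_edges r (root_path x) x" by (rule gpath_mono)
  have hom: "\<forall>x\<in>V. \<forall>y\<in>V. \<forall>a. (x, a, y) \<in> down_edges \<longrightarrow> (lang_state x, a, lang_state y) \<in> lang_trans"
    unfolding lang_trans_def by force
  have "\<forall>e\<in>set (root_path x). snd (snd e) \<in> V"
    using inside by (simp add: subtree_iff)
  then show ?thesis unfolding lang_run_def by (rule gpath_map_edge[OF hom path_down root_in])
qed

lemma lang_run_inj: "inj_on lang_run V"
proof (rule inj_onI)
  fix x y assume x: "x \<in> V" and y: "y \<in> V" and "lang_run x = lang_run y"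
  then have "map edge_label (root_path x) = map edge_label (root_path y)"
    unfolding lang_run_def by (metis labels_map_edge)
  with root_path[OF x] root_path[OF y] have "root_path x = root_path y"
    using gpath_eq_if_labels_eq[OF deterministic] by blast
  then show "x = y" using root_path_inj x y by blast
qed

lemma lang_run_snoc:
  assumes x: "x \<in> V" and y: "y \<in> V" and snoc: "lang_run y = lang_run x @ [\<tau>]"
  shows "(x, edge_label \<tau>, y) \<in> down_edges"
proof -
  have "root_path y \<noteq> []" using snoc unfolding lang_run_def by auto
  then obtain xs u a w where ys: "root_path y = xs @ [(u, a, w)]"
    by (metis append_butlast_last_id prod_cases3)
  then have "w = y" "u \<in> V" "root_path u = xs" using root_path_snoc[OF y ys] by auto
  moreover have "lang_run u = lang_run x" and "map_edge lang_state (u, a, w) = \<tau>"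
    using snoc ys \<open>root_path u = xs\<close> unfolding lang_run_def by auto
  ultimately have "u = x" "a = edge_label \<tau>"
    using inj_onD[OF lang_run_inj _ _ x] by auto
  then show ?thesis using ys \<open>w = y\<close> \<open>root_path u = xs\<close> x y unfolding down_edges_def by simp
qed

lemma lang_run_surj: "\<rho> \<in> runs lang_trans (lang_state r) \<Longrightarrow> \<exists>x\<in>V. lang_run x = \<rho>"
proof (induction \<rho> rule: rev_induct)
  case Nil
  show ?case by (intro bexI[of _ r]) (simp_all add: lang_run_def root_in)
next
  case (snoc \<tau> \<rho>)
  then have \<rho>: "gpath lang_trans (lang_state r) \<rho> (fst \<tau>)" and \<tau>: "\<tau> \<in> lang_trans"
    using runs_snocD by blast+
  then obtain x where x: "x \<in> V" "lang_run x = \<rho>"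
    using snoc.IH unfolding runs_def by blast
  have "fst \<tau> = lang_state x" using gpath_target_unique \<rho> lang_run_path[OF x(1)] x(2) by metis
  then obtain a q where \<tau>_eq: "\<tau> = (lang_state x, a, q)" by (cases \<tau>) auto
  then obtain w where w: "(x, a, w) \<in> down_edges" "q = lang_state w"
    using lang_trans_from_state[OF x(1)] \<tau> by blast
  then have "w \<in> V" "lang_run w = \<rho> @ [\<tau>]"
    using x(2) \<tau>_eq unfolding lang_run_def down_edges_def by auto
  then show ?case by blast
qed

lemma lang_run_edges:
  assumes x: "x \<in> V" and y: "y \<in> V"
  shows "(x, a, y) \<in> E \<longleftrightarrow> (lang_run x, a, lang_run y) \<in> run_edges ainv lang_trans (lang_state r)"
proof
  assume e: "(x, a, y) \<in> E"
  consider "root_path y = root_path x @ [(x, a, y)]" | "root_path x = root_path y @ [(y, ainv a, x)]"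
    using edge_parent_or_child[OF e] by blast
  then show "(lang_run x, a, lang_run y) \<in> run_edges ainv lang_trans (lang_state r)"
  proof cases
    case 1
    then have "lang_run y = lang_run x @ [(lang_state x, a, lang_state y)]"
      unfolding lang_run_def by simp
    then show ?thesis using lang_run_path[OF y] unfolding run_edges_iff runs_def by auto
  next
    case 2
    then have "lang_run x = lang_run y @ [(lang_state y, ainv a, lang_state x)]"
      unfolding lang_run_def by simp
    moreover have "ainv (ainv a) = a" using ainv_ainv edge_in[OF e] by blast
    ultimately show ?thesis using lang_run_path[OF x] unfolding run_edges_iff runs_def by auto
  qed
next
  assume "(lang_run x, a, lang_run y) \<in> run_edges ainv lang_trans (lang_state r)"
  then consider \<tau> where "lang_run y = lang_run x @ [\<tau>]" "a = edge_label \<tau>"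
    | \<tau> where "lang_run x = lang_run y @ [\<tau>]" "a = ainv (edge_label \<tau>)"
    unfolding run_edges_iff by blast
  then show "(x, a, y) \<in> E"
  proof cases
    case 1
    then show ?thesis using lang_run_snoc[OF x y] down_edges_subset by blast
  next
    case 2
    then show ?thesis using lang_run_snoc[OF y x] down_edges_subset edge_inverse by blast
  qed
qed

lemma lang_automaton:
  "\<exists>Q T p. reduced_pDFA A ainv Q T \<and> p \<in> Q \<and> rooted_iso V E r (runs T p) (run_edges ainv T p) []"
proof (intro exI conjI)
  show "reduced_pDFA A ainv (lang_state ` V) lang_trans" by (rule lang_reduced_pDFA)
  show "lang_state r \<in> lang_state ` V" using root_in by blast
  have "bij_betw lang_run V (runs lang_trans (lang_state r))"
    unfolding bij_betw_def runs_def using lang_run_inj lang_run_path lang_run_surj[unfolded runs_def]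
    by blast
  moreover have "lang_run r = []" by (simp add: lang_run_def)
  ultimately show "rooted_iso V E r (runs lang_trans (lang_state r)) (run_edges ainv lang_trans (lang_state r)) []"
    unfolding rooted_iso_def using lang_run_edges by blast
qed

end

end


section \<open>Trees isomorphic to a graph of runs\<close>

locale run_graph_iso = rooted_involutive_tree A ainv V E r
  for A :: "'a set" and ainv :: "'a \<Rightarrow> 'a"
    and V :: "'v set" and E :: "('v \<times> 'a \<times> 'v) set" and r :: 'v +
  fixes Q :: "nat set" and T :: "(nat \<times> 'a \<times> nat) set" and p :: nat
    and \<phi> :: "'v \<Rightarrow> (nat \<times> 'a \<times> nat) list"
  assumes reduced: "reduced_pDFA A ainv Q T" and start: "p \<in> Q"
    and bij: "bij_betw \<phi> V (runs T p)" and root: "\<phi> r = []"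
    and edges: "\<forall>x\<in>V. \<forall>y\<in>V. \<forall>a. (x, a, y) \<in> E \<longleftrightarrow> (\<phi> x, a, \<phi> y) \<in> run_edges ainv T p"
begin

lemma run_in: "x \<in> V \<Longrightarrow> \<phi> x \<in> runs T p"
  using bij by (auto simp: bij_betw_def)

lemma run_inj: "x \<in> V \<Longrightarrow> y \<in> V \<Longrightarrow> \<phi> x = \<phi> y \<Longrightarrow> x = y"
  using bij by (auto simp: bij_betw_def inj_on_def)

lemma run_surj: "\<rho> \<in> runs T p \<Longrightarrow> \<exists>x\<in>V. \<phi> x = \<rho>"
  using bij by (metis bij_betw_def imageE)

lemma edge_iff_run_edge: "x \<in> V \<Longrightarrow> y \<in> V \<Longrightarrow> (x, a, y) \<in> E \<longleftrightarrow> (\<phi> x, a, \<phi> y) \<in> run_edges ainv T p"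
  using edges by blast

lemma tree_deterministic: "deterministic E"
  unfolding deterministic_def
proof (intro allI impI, elim conjE)
  fix u a v v' assume uv: "(u, a, v) \<in> E" and uv': "(u, a, v') \<in> E"
  then have in_V: "u \<in> V" "v \<in> V" "v' \<in> V" using edge_in by blast+
  then have "(\<phi> u, a, \<phi> v) \<in> run_edges ainv T p" "(\<phi> u, a, \<phi> v') \<in> run_edges ainv T p"
    using uv uv' edge_iff_run_edge by blast+
  then have "\<phi> v = \<phi> v'"
    using deterministic_run_edges[OF reduced] unfolding deterministic_def by blast
  then show "v = v'" using run_inj in_V by blast
qed

lemma run_edge_cases:
  assumes "(y, a, x) \<in> E"
  shows "(\<exists>\<tau>. \<phi> x = \<phi> y @ [\<tau>]) \<or> (\<exists>\<tau>. \<phi> y = \<phi> x @ [\<tau>])"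
proof -
  have "(\<phi> y, a, \<phi> x) \<in> run_edges ainv T p" using edge_iff_run_edge edge_in assms by blast
  then show ?thesis unfolding run_edges_iff by blast
qed

text \<open>The isomorphism preserves levels, so it maps the parent of a node to the parent of its
  image.\<close>

lemma run_of_down_edge: "(y, a, x) \<in> down_edges \<Longrightarrow> \<exists>\<tau>. \<phi> x = \<phi> y @ [\<tau>]"
proof (induction "length (root_path y)" arbitrary: x y a)
  case 0
  then have "y \<in> V" "root_path y = root_path r" by (simp_all add: down_edges_iff)
  then have "\<phi> y = []" using root_path_inj root_in root by blast
  moreover have "(y, a, x) \<in> E" using down_edges_subset 0 by blast
  ultimately show ?case using run_edge_cases by fastforce
next
  case (Suc n)
  then have y: "y \<in> V" "root_path y \<noteq> []" and x: "x \<in> V" "root_path x = root_path y @ [(y, a, x)]"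
    by (auto simp: down_edges_iff)
  then obtain xs z b w where ys: "root_path y = xs @ [(z, b, w)]"
    by (metis append_butlast_last_id prod_cases3)
  then have z: "(z, b, y) \<in> down_edges" "z \<in> V" "root_path z = xs"
    using root_path_snoc[OF y(1) ys] y by (auto simp: down_edges_iff)
  moreover have "n = length (root_path z)" using Suc.hyps(2) ys z(3) by simp
  ultimately obtain \<tau>' where \<tau>': "\<phi> y = \<phi> z @ [\<tau>']" using Suc.hyps(1) by blast
  show ?case
  proof (rule ccontr)
    assume "\<nexists>\<tau>. \<phi> x = \<phi> y @ [\<tau>]"
    then obtain \<tau> where "\<phi> y = \<phi> x @ [\<tau>]"
      using run_edge_cases Suc.prems down_edges_subset by blast
    then have "\<phi> x = \<phi> z" using \<tau>' by simp
    then have "x = z" using run_inj x(1) z(2) by blast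
    then show False using x(2) ys z(3) by simp
  qed
qed

lemma run_snoc_iff_down_edge:
  assumes x: "x \<in> V" and y: "y \<in> V"
  shows "(\<exists>\<tau>. \<phi> x = \<phi> y @ [\<tau>]) \<longleftrightarrow> (\<exists>a. (y, a, x) \<in> down_edges)"
proof
  assume "\<exists>\<tau>. \<phi> x = \<phi> y @ [\<tau>]"
  then obtain \<tau> where \<tau>: "\<phi> x = \<phi> y @ [\<tau>]" by blast
  then have "(y, edge_label \<tau>, x) \<in> E"
    using edge_iff_run_edge[OF y x] run_in[OF x] unfolding run_edges_iff by auto
  then consider "(y, edge_label \<tau>, x) \<in> down_edges" | "(x, ainv (edge_label \<tau>), y) \<in> down_edges"
    using edge_parent_or_child x y by (auto simp: down_edges_iff)
  then show "\<exists>a. (y, a, x) \<in> down_edges"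
  proof cases
    case 2
    then obtain \<tau>' where "\<phi> y = \<phi> x @ [\<tau>']" using run_of_down_edge by blast
    then show ?thesis using \<tau> by simp
  qed blast
qed (use run_of_down_edge in blast)

lemma root_path_prefix_if_run_prefix:
  assumes v: "v \<in> V"
  shows "x \<in> V \<Longrightarrow> \<phi> x = \<phi> v @ \<sigma> \<Longrightarrow> prefix (root_path v) (root_path x)"
proof (induction \<sigma> arbitrary: x rule: rev_induct)
  case Nil
  then have "x = v" using run_inj[of x v] v by simp
  then show ?case by simp
next
  case (snoc \<tau> \<sigma>)
  have "\<phi> v @ \<sigma> \<in> runs T p"
    using run_in[OF snoc.prems(1)] snoc.prems(2) runs_prefix[of "\<phi> v @ \<sigma>" "[\<tau>]"] by simp
  then obtain y where y: "y \<in> V" "\<phi> y = \<phi> v @ \<sigma>" using run_surj by blast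
  moreover have "\<phi> x = \<phi> y @ [\<tau>]" using snoc.prems(2) y(2) by simp
  ultimately obtain a where "(y, a, x) \<in> down_edges"
    using run_snoc_iff_down_edge[OF snoc.prems(1)] by blast
  then show ?case using snoc.IH[OF y] by (simp add: down_edges_iff)
qed

lemma run_prefix_if_root_path_prefix:
  assumes v: "v \<in> V"
  shows "x \<in> V \<Longrightarrow> root_path x = root_path v @ ys \<Longrightarrow> prefix (\<phi> v) (\<phi> x)"
proof (induction ys arbitrary: x rule: rev_induct)
  case Nil
  then have "x = v" using root_path_inj[of x v] v by simp
  then show ?case by simp
next
  case (snoc e ys)
  obtain z a w where e: "e = (z, a, w)" by (cases e)
  then have x: "root_path x = (root_path v @ ys) @ [(z, a, w)]" using snoc.prems(2) by simp
  then have "w = x" "z \<in> V" "root_path z = root_path v @ ys"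
    using root_path_snoc[OF snoc.prems(1) x] by simp_all
  then have z: "(z, a, x) \<in> down_edges" "z \<in> V" "root_path z = root_path v @ ys"
    using snoc.prems(1) x by (simp_all add: down_edges_iff)
  obtain \<tau> where "\<phi> x = \<phi> z @ [\<tau>]" using run_of_down_edge[OF z(1)] by blast
  then show ?case using snoc.IH[OF z(2,3)] by simp
qed

lemma run_prefix_iff_root_path_prefix:
  assumes "x \<in> V" and "v \<in> V"
  shows "prefix (\<phi> v) (\<phi> x) \<longleftrightarrow> prefix (root_path v) (root_path x)"
  using root_path_prefix_if_run_prefix[OF assms(2,1)] run_prefix_if_root_path_prefix[OF assms(2,1)]
  unfolding prefix_def by blast

lemma bij_betw_subtree_runs:
  assumes v: "v \<in> V"
  shows "bij_betw \<phi> (subtree v) {\<rho> \<in> runs T p. prefix (\<phi> v) \<rho>}"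
proof -
  have "\<phi> ` subtree v \<subseteq> {\<rho> \<in> runs T p. prefix (\<phi> v) \<rho>}"
    using run_in run_prefix_iff_root_path_prefix[OF _ v] by (auto simp: subtree_iff)
  moreover have "{\<rho> \<in> runs T p. prefix (\<phi> v) \<rho>} \<subseteq> \<phi> ` subtree v"
  proof
    fix \<rho> assume \<rho>: "\<rho> \<in> {\<rho> \<in> runs T p. prefix (\<phi> v) \<rho>}"
    then obtain x where "x \<in> V" "\<phi> x = \<rho>" using run_surj by blast
    moreover have "x \<in> subtree v"
      using calculation \<rho> run_prefix_iff_root_path_prefix[OF _ v] by (auto simp: subtree_iff)
    ultimately show "\<rho> \<in> \<phi> ` subtree v" by blast
  qed
  moreover have "inj_on \<phi> (subtree v)"
    using bij_betw_imp_inj_on[OF bij] subtree_subset by (rule inj_on_subset)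
  ultimately show ?thesis unfolding bij_betw_def by blast
qed

text \<open>Runs ending in the same state have the same extensions, so exchanging the prefix
  \<open>\<phi> v\<close> of runs for \<open>\<phi> v'\<close> transfers the subtree of \<open>v\<close> onto the subtree of \<open>v'\<close>.\<close>

definition transfer :: "'v \<Rightarrow> 'v \<Rightarrow> 'v \<Rightarrow> 'v" where
  "transfer v v' x = inv_into (subtree v') \<phi> (\<phi> v' @ drop (length (\<phi> v)) (\<phi> x))"

context
  fixes v v' q
  assumes v: "v \<in> V" and v': "v' \<in> V"
    and same_state: "gpath T p (\<phi> v) q" "gpath T p (\<phi> v') q"
begin

lemma bij_betw_transfer: "bij_betw (transfer v v') (subtree v) (subtree v')"
proof -
  have "transfer v v' = inv_into (subtree v') \<phi> \<circ> (\<lambda>\<sigma>. \<phi> v' @ drop (length (\<phi> v)) \<sigma>) \<circ> \<phi>"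
    by (rule ext) (simp add: transfer_def)
  then show ?thesis
    using bij_betw_trans[OF bij_betw_trans[OF bij_betw_subtree_runs[OF v] bij_betw_shift_runs[OF same_state]]
        bij_betw_inv_into[OF bij_betw_subtree_runs[OF v']]]
    by (simp add: comp_assoc)
qed

lemma run_transfer:
  assumes x: "x \<in> subtree v"
  shows "\<phi> (transfer v v' x) = \<phi> v' @ drop (length (\<phi> v)) (\<phi> x)"
proof -
  have "\<phi> v' @ drop (length (\<phi> v)) (\<phi> x) \<in> \<phi> ` subtree v'"
    using bij_betw_apply[OF bij_betw_shift_runs[OF same_state] bij_betw_apply[OF bij_betw_subtree_runs[OF v] x]]
      bij_betw_subtree_runs[OF v'] by (simp add: bij_betw_def)
  then show ?thesis unfolding transfer_def by (simp add: f_inv_into_f)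
qed

lemma transfer_root: "transfer v v' v = v'"
  unfolding transfer_def using bij_betw_subtree_runs[OF v'] subtree_self[OF v']
  by (simp add: bij_betw_def inv_into_f_f)

lemma transfer_edges:
  assumes x: "x \<in> subtree v" and y: "y \<in> subtree v"
  shows "(x, a, y) \<in> E \<longleftrightarrow> (transfer v v' x, a, transfer v v' y) \<in> E"
proof -
  obtain \<sigma>1 \<sigma>2 where \<sigma>: "\<phi> x = \<phi> v @ \<sigma>1" "\<phi> y = \<phi> v @ \<sigma>2"
    and runs: "\<phi> v @ \<sigma>1 \<in> runs T p" "\<phi> v @ \<sigma>2 \<in> runs T p"
    using bij_betw_apply[OF bij_betw_subtree_runs[OF v] x] bij_betw_apply[OF bij_betw_subtree_runs[OF v] y]
    unfolding prefix_def by auto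
  have in_V: "x \<in> V" "y \<in> V" "transfer v v' x \<in> V" "transfer v v' y \<in> V"
    using x y bij_betw_apply[OF bij_betw_transfer x] bij_betw_apply[OF bij_betw_transfer y]
    by (simp_all add: subtree_iff)
  have "(x, a, y) \<in> E \<longleftrightarrow> (\<phi> v @ \<sigma>1, a, \<phi> v @ \<sigma>2) \<in> run_edges ainv T p"
    using edge_iff_run_edge[OF in_V(1,2)] \<sigma> by simp
  also have "\<dots> \<longleftrightarrow> (\<phi> v' @ \<sigma>1, a, \<phi> v' @ \<sigma>2) \<in> run_edges ainv T p"
    by (rule run_edges_shift[OF same_state runs])
  also have "\<dots> \<longleftrightarrow> (transfer v v' x, a, transfer v v' y) \<in> E"
    using edge_iff_run_edge[OF in_V(3,4)] run_transfer[OF x] run_transfer[OF y] \<sigma> by simp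
  finally show ?thesis .
qed

end

lemma end_isomorphic_if_same_state:
  assumes v: "v \<in> V" "v \<noteq> r" and v': "v' \<in> V" "v' \<noteq> r"
    and same_state: "gpath T p (\<phi> v) q" "gpath T p (\<phi> v') q"
  shows "end_isomorphic V E r v v'"
proof -
  have not_ancestor: "\<not> prefix (root_path w) (root_path r)" if "w \<in> V" "w \<noteq> r" for w
  proof -
    have "root_path w \<noteq> root_path r" using that root_path_inj root_in by blast
    then show ?thesis by simp
  qed
  show ?thesis unfolding end_isomorphic_def
    end_cone_eq_subtree[OF root_in v(1) not_ancestor[OF v]]
    end_cone_eq_subtree[OF root_in v'(1) not_ancestor[OF v']]
    frontier_eq_singleton[OF root_in v(1) not_ancestor[OF v]]
    frontier_eq_singleton[OF root_in v'(1) not_ancestor[OF v']]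
    using bij_betw_transfer[OF v(1) v'(1) same_state] transfer_root[OF v(1) v'(1) same_state]
      transfer_edges[OF v(1) v'(1) same_state]
    by (intro exI[of _ "transfer v v'"]) simp
qed

definition final_state :: "'v \<Rightarrow> nat" where
  "final_state v = (THE q. gpath T p (\<phi> v) q)"

lemma final_state: "v \<in> V \<Longrightarrow> gpath T p (\<phi> v) (final_state v)"
proof -
  assume "v \<in> V"
  then obtain q where q: "gpath T p (\<phi> v) q" using run_in unfolding runs_def by blast
  moreover have "q' = q" if "gpath T p (\<phi> v) q'" for q'
    using gpath_target_unique[OF that q] .
  ultimately show ?thesis unfolding final_state_def by (rule theI)
qed

lemma finite_final_states: "finite (final_state ` V)"
proof -
  have "a_graph A Q T" and "finite Q"
    using reduced unfolding reduced_pDFA_def pDFA_def by blast+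
  then have "final_state ` V \<subseteq> Q" using gpath_target_in[OF _ start final_state] by blast
  then show ?thesis using \<open>finite Q\<close> by (rule finite_subset)
qed

text \<open>The end-cones with respect to the root are classified by the final states of the runs.\<close>

lemma tree_context_free:
  assumes "finite A"
  shows "context_free A ainv V E"
proof -
  define rep where "rep q = (SOME v. v \<in> V - {r} \<and> final_state v = q)" for q
  have rep: "rep (final_state v) \<in> V - {r} \<and> final_state (rep (final_state v)) = final_state v"
    if "v \<in> V - {r}" for v
  proof -
    have "\<exists>w. w \<in> V - {r} \<and> final_state w = final_state v" using that by blast
    then show ?thesis unfolding rep_def by (rule someI_ex)
  qed
  define F where "F = insert r (rep ` final_state ` (V - {r}))"
  have "F \<subseteq> V" unfolding F_def using rep root_in by blast
  moreover have "finite F"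
    unfolding F_def using finite_subset[OF image_mono[OF Diff_subset] finite_final_states] by simp
  moreover have "\<forall>v\<in>V. \<exists>u\<in>F. end_isomorphic V E r u v"
  proof
    fix v assume v: "v \<in> V"
    show "\<exists>u\<in>F. end_isomorphic V E r u v"
    proof (cases "v = r")
      case True
      then show ?thesis unfolding F_def by (intro bexI[of _ r]) (simp_all add: end_isomorphic_refl)
    next
      case False
      then have rep_v: "rep (final_state v) \<in> V" "rep (final_state v) \<noteq> r"
        and "gpath T p (\<phi> (rep (final_state v))) (final_state v)"
        using rep[of v] final_state[of "rep (final_state v)"] v by auto
      then have "end_isomorphic V E r (rep (final_state v)) v"
        using end_isomorphic_if_same_state[OF rep_v v False _ final_state[OF v]] by blast
      then show ?thesis using False v unfolding F_def by blast
    qed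
  qed
  ultimately have "\<exists>r\<in>V. \<exists>F. finite F \<and> F \<subseteq> V \<and> (\<forall>v\<in>V. \<exists>u\<in>F. end_isomorphic V E r u v)"
    using root_in by blast
  moreover have "bounded_degree V E"
    using bounded_degree_if_deterministic[OF assms a_graph tree_deterministic] .
  ultimately show ?thesis unfolding context_free_def
    using assms alphabet a_graph involutive connected by blast
qed

end

theorem theorem3p9:
  fixes A :: "'a set" and ainv :: "'a \<Rightarrow> 'a"
    and V :: "'v set" and E :: "('v \<times> 'a \<times> 'v) set" and r :: 'v
  assumes "finite A" and "involutive_alphabet A ainv"
    and "rooted_tree A ainv V E r"
  shows "(deterministic E \<and> context_free A ainv V E) \<longleftrightarrow>
    (\<exists>Q T p. reduced_pDFA A ainv Q T \<and> p \<in> Q \<and>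
        rooted_iso V E r (runs T p) (run_edges ainv T p) [])"
proof
  assume det_cf: "deterministic E \<and> context_free A ainv V E"
  then interpret deterministic_tree A ainv V E r
    using assms by unfold_locales auto
  show "\<exists>Q T p. reduced_pDFA A ainv Q T \<and> p \<in> Q \<and> rooted_iso V E r (runs T p) (run_edges ainv T p) []"
    using lang_automaton[OF finite_subtree_langs] det_cf by blast
next
  assume "\<exists>Q T p. reduced_pDFA A ainv Q T \<and> p \<in> Q \<and> rooted_iso V E r (runs T p) (run_edges ainv T p) []"
  then obtain Q T p \<phi> where "reduced_pDFA A ainv Q T" "p \<in> Q"
    and "bij_betw \<phi> V (runs T p)" "\<phi> r = []"
    and "\<forall>x\<in>V. \<forall>y\<in>V. \<forall>a. (x, a, y) \<in> E \<longleftrightarrow> (\<phi> x, a, \<phi> y) \<in> run_edges ainv T p"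
    unfolding rooted_iso_def by blast
  then interpret run_graph_iso A ainv V E r Q T p \<phi>
    using assms by unfold_locales auto
  show "deterministic E \<and> context_free A ainv V E"
    using tree_deterministic tree_context_free[OF assms(1)] by blast
qed

end
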